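(* Denote by $(a_2,a_4,a_5,a_6,a_7,a_8)$ the Lie algebra of the family $F_8$ with $a_1=0$ and these remaining parameters. Then every such Lie algebra is isomorphic to one of the following: $(\lambda,1,-1,1,0,0)$, $(\lambda,1,0,0,0,0)$, $(-2,1,1,0,0,0)$, $(1,0,-1,1,\lambda,0)$, $(0,0,\lambda,1,1,0)$, $(0,0,\lambda,1,0,0)$, $(\lambda,0,0,0,1,1)$, $(1,0,0,0,1,0)$, $(1,0,0,0,0,1)$, $(1,0,0,0,0,0)$, $(0,0,1,0,1,0)$, $(0,0,1,0,0,0)$, $(0,0,0,0,1,0)$, $(0,0,0,0,0,1)$, $(0,0,0,0,0,0)$, where $\lambda\in\mathbb{K}$.
   Context: $\mathbb{K}$ is algebraically closed of characteristic $0$ (e.g. $\mathbb{C}$). The family $F_8$ on basis $\{X_0,\dots,X_7\}$ (parameters $a_1,a_2,a_4,a_5,a_6,a_7,a_8\in\mathbb{K}$ with $a_1(5a_4+2a_2)=0$): $\mu(X_0,X_i)=X_{i+1}$ ($1\le i\le 6$), $\mu(X_2,X_5)=a_1X_7$, $\mu(X_1,X_5)=a_1X_6+a_2X_7$, $\mu(X_3,X_4)=-a_1X_7$, $\mu(X_2,X_4)=a_4X_7$, $\mu(X_1,X_4)=a_1X_5+(a_2+a_4)X_6+a_5X_7$, $\mu(X_2,X_3)=a_4X_6+a_6X_7$, $\mu(X_1,X_3)=a_1X_4+(a_2+2a_4)X_5+(a_5+a_6)X_6+a_7X_7$, $\mu(X_1,X_2)=a_1X_3+(a_2+2a_4)X_4+(a_5+a_6)X_5+a_7X_6+a_8X_7$,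 all other brackets $\mu(X_i,X_j)$, $i<j$, zero. *)

theory Defs
  imports "HOL-Computational_Algebra.Polynomial"
begin

text \<open>Vectors of the 8-dimensional space with basis X_0..X_7 are coordinate
functions nat => 'a vanishing outside {0..7}.\<close>

definition basis_vec :: "nat \<Rightarrow> nat \<Rightarrow> 'a::field" where
  "basis_vec k = (\<lambda>m. if m = k then 1 else 0)"

definition V8 :: "(nat \<Rightarrow> 'a::field) set" where
  "V8 = {x. \<forall>i\<ge>8. x i = 0}"

definition F8_up :: "'a::field \<Rightarrow> 'a \<Rightarrow> 'a \<Rightarrow> 'a \<Rightarrow> 'a \<Rightarrow> 'a \<Rightarrow> 'a
    \<Rightarrow> nat \<Rightarrow> nat \<Rightarrow> nat \<Rightarrow> 'a" where
  "F8_up a1 a2 a4 a5 a6 a7 a8 i j =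
    (let e = basis_vec in
     if i = 0 \<and> 1 \<le> j \<and> j \<le> 6 then e (j+1)
     else if i = 2 \<and> j = 5 then (\<lambda>k. a1 * e 7 k)
     else if i = 1 \<and> j = 5 then (\<lambda>k. a1 * e 6 k + a2 * e 7 k)
     else if i = 3 \<and> j = 4 then (\<lambda>k. - a1 * e 7 k)
     else if i = 2 \<and> j = 4 then (\<lambda>k. a4 * e 7 k)
     else if i = 1 \<and> j = 4 then (\<lambda>k. a1 * e 5 k + (a2 + a4) * e 6 k + a5 * e 7 k)
     else if i = 2 \<and> j = 3 then (\<lambda>k. a4 * e 6 k + a6 * e 7 k)
     else if i = 1 \<and> j = 3 then
       (\<lambda>k. a1 * e 4 k + (a2 + 2 * a4) * e 5 k + (a5 + a6) * e 6 k + a7 * e 7 k)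
     else if i = 1 \<and> j = 2 then
       (\<lambda>k. a1 * e 3 k + (a2 + 2 * a4) * e 4 k + (a5 + a6) * e 5 k + a7 * e 6 k + a8 * e 7 k)
     else (\<lambda>k. 0))"

text \<open>Structure constants: sc i j k = coefficient of X_k in mu(X_i,X_j), extended
by skew-symmetry.\<close>
definition F8 :: "'a::field \<Rightarrow> 'a \<Rightarrow> 'a \<Rightarrow> 'a \<Rightarrow> 'a \<Rightarrow> 'a \<Rightarrow> 'a
    \<Rightarrow> nat \<Rightarrow> nat \<Rightarrow> nat \<Rightarrow> 'a" where
  "F8 a1 a2 a4 a5 a6 a7 a8 i j =
    (if i < j then F8_up a1 a2 a4 a5 a6 a7 a8 i j
     else if j < i then (\<lambda>k. - F8_up a1 a2 a4 a5 a6 a7 a8 j i k)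
     else (\<lambda>k. 0))"

definition lbr :: "(nat \<Rightarrow> nat \<Rightarrow> nat \<Rightarrow> 'a::field) \<Rightarrow> (nat \<Rightarrow> 'a) \<Rightarrow> (nat \<Rightarrow> 'a) \<Rightarrow> nat \<Rightarrow> 'a" where
  "lbr c x y = (\<lambda>k. \<Sum>i<8. \<Sum>j<8. x i * y j * c i j k)"

definition lie_iso8 :: "(nat \<Rightarrow> nat \<Rightarrow> nat \<Rightarrow> 'a::field) \<Rightarrow> (nat \<Rightarrow> nat \<Rightarrow> nat \<Rightarrow> 'a) \<Rightarrow> bool" where
  "lie_iso8 c c' = (\<exists>f. bij_betw f V8 V8
      \<and> (\<forall>x\<in>V8. \<forall>y\<in>V8. f (\<lambda>k. x k + y k) = (\<lambda>k. f x k + f y k))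
      \<and> (\<forall>x\<in>V8. \<forall>s. f (\<lambda>k. s * x k) = (\<lambda>k. s * f x k))
      \<and> (\<forall>x\<in>V8. \<forall>y\<in>V8. f (lbr c x y) = lbr c' (f x) (f y)))"

definition L8 :: "'a::field \<Rightarrow> 'a \<Rightarrow> 'a \<Rightarrow> 'a \<Rightarrow> 'a \<Rightarrow> 'a \<Rightarrow> nat \<Rightarrow> nat \<Rightarrow> nat \<Rightarrow> 'a" where
  "L8 a2 a4 a5 a6 a7 a8 = F8 0 a2 a4 a5 a6 a7 a8"

definition alg_closed :: "'a::field itself \<Rightarrow> bool" where
  "alg_closed _ = (\<forall>p::'a poly. degree p > 0 \<longrightarrow> (\<exists>x. poly p x = 0))"

end

theory Submission
  imports Defs
begin

text \<open>Every isomorphism used is a lower triangular change of basis, checked entrywise on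
  the structure constants. Rescaling \<open>X\<^sub>0 \<mapsto> x X\<^sub>0\<close>, \<open>X\<^sub>i \<mapsto> x^(i-1) y X\<^sub>i\<close> multiplies a
  parameter of weight \<open>w\<close> (2 for \<open>a2, a4\<close>, 3 for \<open>a5, a6\<close>, 4 for \<open>a7\<close>, 5 for \<open>a8\<close>) by
  \<open>y / x^w\<close>. The shifts \<open>X\<^sub>i \<mapsto> X\<^sub>i + t X\<^sub>i\<^sub>+\<^sub>2\<close> and \<open>X\<^sub>i \<mapsto> X\<^sub>i + t X\<^sub>i\<^sub>+\<^sub>3\<close> (\<open>i \<ge> 1\<close>) change
  only \<open>a7, a8\<close>, by \<open>-2 a4 t, -2 a6 t\<close> resp. \<open>a8\<close> by \<open>-3 a4 t\<close>, while replacing \<open>X\<^sub>0\<close> by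
  \<open>X\<^sub>0 + t X\<^sub>1\<close> moves \<open>a5, a6\<close> by \<open>-(5 a4\<^sup>2 + 5 a2 a4 + 2 a2\<^sup>2) t, -3 a4 (a2 + a4) t\<close>.
  Splitting according to which of \<open>a4, a2 + 2 a4, a2, a6, a5\<close> vanish, these moves reach
  one of the listed normal forms; algebraic closedness is needed only for the square and
  cube roots in the case \<open>a4 = a6 = 0 \<noteq> a2\<close>.\<close>

lemma sum_lessThan_8:
  "(\<Sum>i<(8::nat). f i) = f 0 + f 1 + f 2 + f 3 + f 4 + f 5 + f 6 + (f 7 :: 'a::comm_monoid_add)"
  by (simp add: numeral_eq_Suc lessThan_Suc add_ac)

lemma all_lessThan_8:
  "(\<forall>i<(8::nat). P i) \<longleftrightarrow> P 0 \<and> P 1 \<and> P 2 \<and> P 3 \<and> P 4 \<and> P 5 \<and> P 6 \<and> P 7"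
proof -
  have "{..<8::nat} = {0, 1, 2, 3, 4, 5, 6, 7}" by auto
  then show ?thesis by (metis lessThan_iff insert_iff empty_iff)
qed

definition mat_apply :: "(nat \<Rightarrow> nat \<Rightarrow> 'a::field) \<Rightarrow> (nat \<Rightarrow> 'a) \<Rightarrow> nat \<Rightarrow> 'a" where
  "mat_apply M x = (\<lambda>k. if k < 8 then \<Sum>i<8. M k i * x i else 0)"

lemma V8_add: "x \<in> V8 \<Longrightarrow> y \<in> V8 \<Longrightarrow> (\<lambda>k. x k + y k) \<in> V8"
  by (simp add: V8_def)

lemma V8_scale: "x \<in> V8 \<Longrightarrow> (\<lambda>k. s * x k) \<in> V8"
  by (simp add: V8_def)

lemma mat_apply_in_V8: "mat_apply M x \<in> V8"
  by (simp add: V8_def mat_apply_def)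

lemma lbr_in_V8: "(\<And>p q k. 8 \<le> k \<Longrightarrow> c p q k = 0) \<Longrightarrow> lbr c x y \<in> V8"
  by (simp add: V8_def lbr_def)

lemma sum_lower_triangular_row:
  fixes M :: "nat \<Rightarrow> nat \<Rightarrow> 'a::field"
  assumes "\<And>k i. k < i \<Longrightarrow> M k i = 0" and "k < 8"
  shows "(\<Sum>i<8. M k i * z i) = (\<Sum>i<k. M k i * z i) + M k k * z k"
proof -
  have "(\<Sum>i<8. M k i * z i) = (\<Sum>i<Suc k. M k i * z i)"
    by (rule sum.mono_neutral_right) (use assms in auto)
  then show ?thesis by simp
qed

lemma inj_on_mat_apply_lower_triangular:
  fixes M :: "nat \<Rightarrow> nat \<Rightarrow> 'a::field"
  assumes tri: "\<And>k i. k < i \<Longrightarrow> M k i = 0" and diag: "\<And>i. i < 8 \<Longrightarrow> M i i \<noteq> 0"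
  shows "inj_on (mat_apply M) V8"
proof
  fix x y assume x: "x \<in> V8" and y: "y \<in> V8" and eq: "mat_apply M x = mat_apply M y"
  have row: "(\<Sum>i<8. M k i * x i) = (\<Sum>i<8. M k i * y i)" if "k < 8" for k
    using fun_cong[OF eq, of k] that by (simp add: mat_apply_def)
  have "x k = y k" if "k < 8" for k
    using that
  proof (induction k rule: less_induct)
    case (less k)
    have "(\<Sum>i<k. M k i * x i) = (\<Sum>i<k. M k i * y i)"
      by (rule sum.cong) (use less in auto)
    then have "M k k * x k = M k k * y k"
      using row[OF less.prems] sum_lower_triangular_row[where M = M and k = k and z = x, OF tri less.prems]
        sum_lower_triangular_row[where M = M and k = k and z = y, OF tri less.prems]
      by simp
    then show ?case using diag[OF less.prems] by simp
  qed
  moreover have "x k = y k" if "\<not> k < 8" for k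
    using x y that by (simp add: V8_def)
  ultimately show "x = y" by blast
qed

primrec forward_subst :: "(nat \<Rightarrow> nat \<Rightarrow> 'a::field) \<Rightarrow> (nat \<Rightarrow> 'a) \<Rightarrow> nat \<Rightarrow> nat \<Rightarrow> 'a" where
  "forward_subst M y 0 = (\<lambda>_. 0)"
| "forward_subst M y (Suc n) = (forward_subst M y n)
     (n := (y n - (\<Sum>j<n. M n j * forward_subst M y n j)) / M n n)"

lemma forward_subst_ge: "n \<le> i \<Longrightarrow> forward_subst M y n i = 0"
  by (induction n) auto

lemma forward_subst_stable: "i < n \<Longrightarrow> forward_subst M y n i = forward_subst M y (Suc i) i"
  by (induction n) (auto simp: less_Suc_eq)

lemma mat_apply_forward_subst:
  fixes M :: "nat \<Rightarrow> nat \<Rightarrow> 'a::field"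
  assumes tri: "\<And>k i. k < i \<Longrightarrow> M k i = 0" and diag: "\<And>i. i < 8 \<Longrightarrow> M i i \<noteq> 0"
    and "y \<in> V8"
  shows "mat_apply M (forward_subst M y 8) = y"
proof
  fix k
  define x where "x = forward_subst M y 8"
  show "mat_apply M x k = y k"
  proof (cases "k < 8")
    case True
    have xk: "x k = forward_subst M y (Suc k) k"
      using True by (simp add: x_def forward_subst_stable)
    have "(\<Sum>j<k. M k j * forward_subst M y k j) = (\<Sum>j<k. M k j * x j)"
      using True by (intro sum.cong) (auto simp: x_def forward_subst_stable)
    then have "M k k * x k = y k - (\<Sum>j<k. M k j * x j)"
      using diag[OF True] by (simp add: xk)
    then show ?thesis
      using sum_lower_triangular_row[where M = M and k = k and z = x, OF tri True] True by (simp add: mat_apply_def)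
  next
    case False
    then show ?thesis using \<open>y \<in> V8\<close> by (simp add: mat_apply_def V8_def)
  qed
qed

lemma bij_betw_mat_apply_lower_triangular:
  fixes M :: "nat \<Rightarrow> nat \<Rightarrow> 'a::field"
  assumes tri: "\<And>k i. k < i \<Longrightarrow> M k i = 0" and diag: "\<And>i. i < 8 \<Longrightarrow> M i i \<noteq> 0"
  shows "bij_betw (mat_apply M) V8 V8"
proof -
  have "y \<in> mat_apply M ` V8" if "y \<in> V8" for y
  proof
    show "y = mat_apply M (forward_subst M y 8)"
      using mat_apply_forward_subst[where M = M, OF tri diag that] by simp
    show "forward_subst M y 8 \<in> V8"
      by (simp add: V8_def forward_subst_ge)
  qed
  then show ?thesis
    using inj_on_mat_apply_lower_triangular[of M, OF tri diag] mat_apply_in_V8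
    unfolding bij_betw_def by blast
qed

lemma swap_inner_sums: "(\<Sum>i\<in>A. \<Sum>j\<in>B. \<Sum>p\<in>C. f i j p) = (\<Sum>i\<in>A. \<Sum>p\<in>C. \<Sum>j\<in>B. f i j p)"
  by (rule sum.cong[OF refl], rule sum.swap)

lemma mat_apply_lbr:
  fixes M :: "nat \<Rightarrow> nat \<Rightarrow> 'a::field"
  assumes "k < 8"
  shows "mat_apply M (lbr c x y) k = (\<Sum>i<8. \<Sum>j<8. x i * y j * (\<Sum>m<8. M k m * c i j m))"
proof -
  have "mat_apply M (lbr c x y) k = (\<Sum>m<8. \<Sum>i<8. \<Sum>j<8. M k m * (x i * y j * c i j m))"
    using assms by (simp add: mat_apply_def lbr_def sum_distrib_left)
  also have "\<dots> = (\<Sum>i<8. \<Sum>m<8. \<Sum>j<8. M k m * (x i * y j * c i j m))"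
    by (rule sum.swap)
  also have "\<dots> = (\<Sum>i<8. \<Sum>j<8. \<Sum>m<8. M k m * (x i * y j * c i j m))"
    by (rule swap_inner_sums)
  also have "\<dots> = (\<Sum>i<8. \<Sum>j<8. x i * y j * (\<Sum>m<8. M k m * c i j m))"
    by (simp add: sum_distrib_left mult_ac)
  finally show ?thesis .
qed

lemma lbr_mat_apply:
  fixes M :: "nat \<Rightarrow> nat \<Rightarrow> 'a::field"
  shows "lbr c (mat_apply M x) (mat_apply M y) k
    = (\<Sum>i<8. \<Sum>j<8. x i * y j * (\<Sum>p<8. \<Sum>q<8. M p i * M q j * c p q k))"
proof -
  let ?F = "\<lambda>i j p q. x i * y j * (M p i * M q j * c p q k)"
  have "(\<Sum>i<8. \<Sum>j<8. x i * y j * (\<Sum>p<8. \<Sum>q<8. M p i * M q j * c p q k))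
      = (\<Sum>i<8. \<Sum>j<8. \<Sum>p<8. \<Sum>q<8. ?F i j p q)"
    by (simp add: sum_distrib_left)
  also have "\<dots> = (\<Sum>i<8. \<Sum>p<8. \<Sum>j<8. \<Sum>q<8. ?F i j p q)"
    by (rule swap_inner_sums)
  also have "\<dots> = (\<Sum>p<8. \<Sum>i<8. \<Sum>j<8. \<Sum>q<8. ?F i j p q)"
    by (rule sum.swap)
  also have "\<dots> = (\<Sum>p<8. \<Sum>i<8. \<Sum>q<8. \<Sum>j<8. ?F i j p q)"
    by (rule sum.cong[OF refl], rule swap_inner_sums)
  also have "\<dots> = (\<Sum>p<8. \<Sum>q<8. \<Sum>i<8. \<Sum>j<8. ?F i j p q)"
    by (rule sum.cong[OF refl], rule sum.swap)
  also have "\<dots> = (\<Sum>p<8. \<Sum>q<8. (\<Sum>i<8. M p i * x i) * (\<Sum>j<8. M q j * y j) * c p q k)"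
    unfolding sum_product sum_distrib_right
    by (intro sum.cong refl) (simp add: sum_distrib_left mult_ac)
  also have "\<dots> = lbr c (mat_apply M x) (mat_apply M y) k"
    by (simp add: lbr_def mat_apply_def)
  finally show ?thesis by (rule sym)
qed

text \<open>Column \<open>i\<close> of \<open>M\<close> holds the coordinates of the image of \<open>X\<^sub>i\<close>.\<close>
lemma lie_iso8_by_matrix:
  fixes M :: "nat \<Rightarrow> nat \<Rightarrow> 'a::field"
  assumes tri: "\<And>k i. k < i \<Longrightarrow> M k i = 0" and diag: "\<And>i. i < 8 \<Longrightarrow> M i i \<noteq> 0"
    and vanish: "\<And>p q k. 8 \<le> k \<Longrightarrow> c' p q k = 0"
    and brackets: "\<forall>i<8. \<forall>j<8. \<forall>k<8.
      (\<Sum>m<8. M k m * c i j m) = (\<Sum>p<8. \<Sum>q<8. M p i * M q j * c' p q k)"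
  shows "lie_iso8 c c'"
  unfolding lie_iso8_def
proof (intro exI conjI ballI allI)
  show "bij_betw (mat_apply M) V8 V8"
    by (rule bij_betw_mat_apply_lower_triangular[where M = M, OF tri diag])
next
  fix x y :: "nat \<Rightarrow> 'a"
  show "mat_apply M (\<lambda>k. x k + y k) = (\<lambda>k. mat_apply M x k + mat_apply M y k)"
    by (auto simp: mat_apply_def algebra_simps sum.distrib)
next
  fix x :: "nat \<Rightarrow> 'a" and s
  show "mat_apply M (\<lambda>k. s * x k) = (\<lambda>k. s * mat_apply M x k)"
    by (auto simp: mat_apply_def algebra_simps sum_distrib_left)
next
  fix x y :: "nat \<Rightarrow> 'a"
  show "mat_apply M (lbr c x y) = lbr c' (mat_apply M x) (mat_apply M y)"
  proof
    fix k
    show "mat_apply M (lbr c x y) k = lbr c' (mat_apply M x) (mat_apply M y) k"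
    proof (cases "k < 8")
      case True
      then show ?thesis
        using brackets by (simp add: mat_apply_lbr lbr_mat_apply)
    next
      case False
      then show ?thesis by (simp add: mat_apply_def lbr_def vanish)
    qed
  qed
qed

lemma lie_iso8_by_diagonal:
  fixes d :: "nat \<Rightarrow> 'a::field"
  assumes nonzero: "\<And>i. i < 8 \<Longrightarrow> d i \<noteq> 0"
    and vanish: "\<And>p q k. 8 \<le> k \<Longrightarrow> c' p q k = 0"
    and brackets: "\<forall>i<8. \<forall>j<8. \<forall>k<8. d k * c i j k = d i * d j * c' i j k"
  shows "lie_iso8 c c'"
proof (rule lie_iso8_by_matrix[where M = "\<lambda>k i. if k = i then d i else 0"])
  show "\<forall>i<8. \<forall>j<8. \<forall>k<8. (\<Sum>m<8. (if k = m then d m else 0) * c i j m)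
    = (\<Sum>p<8. \<Sum>q<8. (if p = i then d i else 0) * (if q = j then d j else 0) * c' p q k)"
  proof -
    have "(if P then a else 0) * b = (if P then a * b else 0)"
      and "a * (if P then b else 0) = (if P then a * b else 0)" for P and a b :: 'a
      by simp_all
    then show ?thesis
      using brackets by (simp add: sum.delta sum.delta')
  qed
qed (use nonzero vanish in auto)

lemma lie_iso8_trans:
  assumes "lie_iso8 c1 c2" and "lie_iso8 c2 c3"
  shows "lie_iso8 c1 c3"
proof -
  obtain f where f: "bij_betw f V8 V8"
      "\<forall>x\<in>V8. \<forall>y\<in>V8. f (\<lambda>k. x k + y k) = (\<lambda>k. f x k + f y k)"
      "\<forall>x\<in>V8. \<forall>s. f (\<lambda>k. s * x k) = (\<lambda>k. s * f x k)"
      "\<forall>x\<in>V8. \<forall>y\<in>V8. f (lbr c1 x y) = lbr c2 (f x) (f y)"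
    using assms(1) unfolding lie_iso8_def by blast
  obtain g where g: "bij_betw g V8 V8"
      "\<forall>x\<in>V8. \<forall>y\<in>V8. g (\<lambda>k. x k + y k) = (\<lambda>k. g x k + g y k)"
      "\<forall>x\<in>V8. \<forall>s. g (\<lambda>k. s * x k) = (\<lambda>k. s * g x k)"
      "\<forall>x\<in>V8. \<forall>y\<in>V8. g (lbr c2 x y) = lbr c3 (g x) (g y)"
    using assms(2) unfolding lie_iso8_def by blast
  have "f x \<in> V8" if "x \<in> V8" for x
    using f(1) that by (rule bij_betw_apply)
  then show ?thesis
    unfolding lie_iso8_def using f g bij_betw_trans[OF f(1) g(1)]
    by (intro exI[of _ "g \<circ> f"]) simp
qed

lemmas [trans] = lie_iso8_trans

lemma lie_iso8_sym:
  fixes c c' :: "nat \<Rightarrow> nat \<Rightarrow> nat \<Rightarrow> 'a::field"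
  assumes "lie_iso8 c c'" and vanish: "\<And>p q k. 8 \<le> k \<Longrightarrow> c p q k = 0"
  shows "lie_iso8 c' c"
proof -
  obtain f where f: "bij_betw f V8 V8"
      "\<forall>x\<in>V8. \<forall>y\<in>V8. f (\<lambda>k. x k + y k) = (\<lambda>k. f x k + f y k)"
      "\<forall>x\<in>V8. \<forall>s. f (\<lambda>k. s * x k) = (\<lambda>k. s * f x k)"
      "\<forall>x\<in>V8. \<forall>y\<in>V8. f (lbr c x y) = lbr c' (f x) (f y)"
    using assms(1) unfolding lie_iso8_def by blast
  define g where "g = inv_into V8 f"
  have g: "bij_betw g V8 V8"
    unfolding g_def by (rule bij_betw_inv_into[OF f(1)])
  have gV: "g u \<in> V8" if "u \<in> V8" for u
    using g that by (rule bij_betw_apply)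
  have fg: "f (g u) = u" if "u \<in> V8" for u
    unfolding g_def using f(1) that by (simp add: bij_betw_inv_into_right)
  have gf: "g (f x) = x" if "x \<in> V8" for x
    unfolding g_def using f(1) that by (simp add: bij_betw_inv_into_left)
  show ?thesis
    unfolding lie_iso8_def
  proof (intro exI[of _ g] conjI ballI allI g)
    fix u v :: "nat \<Rightarrow> 'a" assume u: "u \<in> V8" and v: "v \<in> V8"
    have "g (\<lambda>k. u k + v k) = g (f (\<lambda>k. g u k + g v k))"
      using f(2) gV fg u v by simp
    also have "\<dots> = (\<lambda>k. g u k + g v k)"
      using gf V8_add gV u v by blast
    finally show "g (\<lambda>k. u k + v k) = (\<lambda>k. g u k + g v k)" .
  next
    fix u :: "nat \<Rightarrow> 'a" and s assume u: "u \<in> V8"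
    have "g (\<lambda>k. s * u k) = g (f (\<lambda>k. s * g u k))"
      using f(3) gV fg u by simp
    also have "\<dots> = (\<lambda>k. s * g u k)"
      using gf V8_scale gV u by blast
    finally show "g (\<lambda>k. s * u k) = (\<lambda>k. s * g u k)" .
  next
    fix u v :: "nat \<Rightarrow> 'a" assume u: "u \<in> V8" and v: "v \<in> V8"
    have "g (lbr c' u v) = g (f (lbr c (g u) (g v)))"
      using f(4) gV fg u v by simp
    also have "\<dots> = lbr c (g u) (g v)"
      using gf lbr_in_V8[where c = c, OF vanish] by blast
    finally show "g (lbr c' u v) = lbr c (g u) (g v)" .
  qed
qed

lemma L8_vanish: "8 \<le> k \<Longrightarrow> L8 a2 a4 a5 a6 a7 a8 p q k = 0"
  by (simp add: L8_def F8_def F8_up_def basis_vec_def Let_def)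

lemma L8_iso_sym:
  "lie_iso8 (L8 b2 b4 b5 b6 b7 b8) (L8 a2 a4 a5 a6 a7 a8)
    \<Longrightarrow> lie_iso8 (L8 a2 a4 a5 a6 a7 a8) (L8 b2 b4 b5 b6 b7 b8)"
  by (rule lie_iso8_sym) (simp_all add: L8_vanish)

lemma L8_brackets:
  fixes a2 a4 a5 a6 a7 a8 :: "'a::field"
  shows
    "L8 a2 a4 a5 a6 a7 a8 0 1 = basis_vec 2"
    "L8 a2 a4 a5 a6 a7 a8 0 2 = basis_vec 3"
    "L8 a2 a4 a5 a6 a7 a8 0 3 = basis_vec 4"
    "L8 a2 a4 a5 a6 a7 a8 0 4 = basis_vec 5"
    "L8 a2 a4 a5 a6 a7 a8 0 5 = basis_vec 6"
    "L8 a2 a4 a5 a6 a7 a8 0 6 = basis_vec 7"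
    "L8 a2 a4 a5 a6 a7 a8 0 0 = (\<lambda>_. 0)" "L8 a2 a4 a5 a6 a7 a8 0 7 = (\<lambda>_. 0)"
    "L8 a2 a4 a5 a6 a7 a8 1 0 = (\<lambda>k. - basis_vec 2 k)"
    "L8 a2 a4 a5 a6 a7 a8 1 2 = (\<lambda>k. (a2 + 2 * a4) * basis_vec 4 k + (a5 + a6) * basis_vec 5 k + a7 * basis_vec 6 k + a8 * basis_vec 7 k)"
    "L8 a2 a4 a5 a6 a7 a8 1 3 = (\<lambda>k. (a2 + 2 * a4) * basis_vec 5 k + (a5 + a6) * basis_vec 6 k + a7 * basis_vec 7 k)"
    "L8 a2 a4 a5 a6 a7 a8 1 4 = (\<lambda>k. (a2 + a4) * basis_vec 6 k + a5 * basis_vec 7 k)"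
    "L8 a2 a4 a5 a6 a7 a8 1 5 = (\<lambda>k. a2 * basis_vec 7 k)"
    "L8 a2 a4 a5 a6 a7 a8 1 1 = (\<lambda>_. 0)" "L8 a2 a4 a5 a6 a7 a8 1 6 = (\<lambda>_. 0)"
    "L8 a2 a4 a5 a6 a7 a8 1 7 = (\<lambda>_. 0)"
    "L8 a2 a4 a5 a6 a7 a8 2 0 = (\<lambda>k. - basis_vec 3 k)"
    "L8 a2 a4 a5 a6 a7 a8 2 1 = (\<lambda>k. - ((a2 + 2 * a4) * basis_vec 4 k + (a5 + a6) * basis_vec 5 k + a7 * basis_vec 6 k + a8 * basis_vec 7 k))"
    "L8 a2 a4 a5 a6 a7 a8 2 3 = (\<lambda>k. a4 * basis_vec 6 k + a6 * basis_vec 7 k)"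
    "L8 a2 a4 a5 a6 a7 a8 2 4 = (\<lambda>k. a4 * basis_vec 7 k)"
    "L8 a2 a4 a5 a6 a7 a8 2 2 = (\<lambda>_. 0)" "L8 a2 a4 a5 a6 a7 a8 2 5 = (\<lambda>_. 0)"
    "L8 a2 a4 a5 a6 a7 a8 2 6 = (\<lambda>_. 0)" "L8 a2 a4 a5 a6 a7 a8 2 7 = (\<lambda>_. 0)"
    "L8 a2 a4 a5 a6 a7 a8 3 0 = (\<lambda>k. - basis_vec 4 k)"
    "L8 a2 a4 a5 a6 a7 a8 3 1 = (\<lambda>k. - ((a2 + 2 * a4) * basis_vec 5 k + (a5 + a6) * basis_vec 6 k + a7 * basis_vec 7 k))"
    "L8 a2 a4 a5 a6 a7 a8 3 2 = (\<lambda>k. - (a4 * basis_vec 6 k + a6 * basis_vec 7 k))"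
    "L8 a2 a4 a5 a6 a7 a8 3 3 = (\<lambda>_. 0)" "L8 a2 a4 a5 a6 a7 a8 3 4 = (\<lambda>_. 0)"
    "L8 a2 a4 a5 a6 a7 a8 3 5 = (\<lambda>_. 0)" "L8 a2 a4 a5 a6 a7 a8 3 6 = (\<lambda>_. 0)"
    "L8 a2 a4 a5 a6 a7 a8 3 7 = (\<lambda>_. 0)"
    "L8 a2 a4 a5 a6 a7 a8 4 0 = (\<lambda>k. - basis_vec 5 k)"
    "L8 a2 a4 a5 a6 a7 a8 4 1 = (\<lambda>k. - ((a2 + a4) * basis_vec 6 k + a5 * basis_vec 7 k))"
    "L8 a2 a4 a5 a6 a7 a8 4 2 = (\<lambda>k. - (a4 * basis_vec 7 k))"
    "L8 a2 a4 a5 a6 a7 a8 4 3 = (\<lambda>_. 0)" "L8 a2 a4 a5 a6 a7 a8 4 4 = (\<lambda>_. 0)"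
    "L8 a2 a4 a5 a6 a7 a8 4 5 = (\<lambda>_. 0)" "L8 a2 a4 a5 a6 a7 a8 4 6 = (\<lambda>_. 0)"
    "L8 a2 a4 a5 a6 a7 a8 4 7 = (\<lambda>_. 0)"
    "L8 a2 a4 a5 a6 a7 a8 5 0 = (\<lambda>k. - basis_vec 6 k)"
    "L8 a2 a4 a5 a6 a7 a8 5 1 = (\<lambda>k. - (a2 * basis_vec 7 k))"
    "L8 a2 a4 a5 a6 a7 a8 5 2 = (\<lambda>_. 0)" "L8 a2 a4 a5 a6 a7 a8 5 3 = (\<lambda>_. 0)"
    "L8 a2 a4 a5 a6 a7 a8 5 4 = (\<lambda>_. 0)" "L8 a2 a4 a5 a6 a7 a8 5 5 = (\<lambda>_. 0)"
    "L8 a2 a4 a5 a6 a7 a8 5 6 = (\<lambda>_. 0)" "L8 a2 a4 a5 a6 a7 a8 5 7 = (\<lambda>_. 0)"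
    "L8 a2 a4 a5 a6 a7 a8 6 0 = (\<lambda>k. - basis_vec 7 k)"
    "L8 a2 a4 a5 a6 a7 a8 6 1 = (\<lambda>_. 0)" "L8 a2 a4 a5 a6 a7 a8 6 2 = (\<lambda>_. 0)"
    "L8 a2 a4 a5 a6 a7 a8 6 3 = (\<lambda>_. 0)" "L8 a2 a4 a5 a6 a7 a8 6 4 = (\<lambda>_. 0)"
    "L8 a2 a4 a5 a6 a7 a8 6 5 = (\<lambda>_. 0)" "L8 a2 a4 a5 a6 a7 a8 6 6 = (\<lambda>_. 0)"
    "L8 a2 a4 a5 a6 a7 a8 6 7 = (\<lambda>_. 0)"
    "L8 a2 a4 a5 a6 a7 a8 7 0 = (\<lambda>_. 0)" "L8 a2 a4 a5 a6 a7 a8 7 1 = (\<lambda>_. 0)"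
    "L8 a2 a4 a5 a6 a7 a8 7 2 = (\<lambda>_. 0)" "L8 a2 a4 a5 a6 a7 a8 7 3 = (\<lambda>_. 0)"
    "L8 a2 a4 a5 a6 a7 a8 7 4 = (\<lambda>_. 0)" "L8 a2 a4 a5 a6 a7 a8 7 5 = (\<lambda>_. 0)"
    "L8 a2 a4 a5 a6 a7 a8 7 6 = (\<lambda>_. 0)" "L8 a2 a4 a5 a6 a7 a8 7 7 = (\<lambda>_. 0)"
  by (simp_all add: L8_def F8_def F8_up_def basis_vec_def Let_def fun_eq_iff)

lemma L8_iso_rescale:
  fixes x y :: "'a::field"
  assumes "x \<noteq> 0" and "y \<noteq> 0"
    and "b2 = a2 * y / x\<^sup>2" "b4 = a4 * y / x\<^sup>2" "b5 = a5 * y / x ^ 3" "b6 = a6 * y / x ^ 3"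
      "b7 = a7 * y / x ^ 4" "b8 = a8 * y / x ^ 5"
  shows "lie_iso8 (L8 a2 a4 a5 a6 a7 a8) (L8 b2 b4 b5 b6 b7 b8)"
proof (rule L8_iso_sym, rule lie_iso8_by_diagonal[where d = "\<lambda>i. if i = 0 then x else x ^ (i - 1) * y"])
  show "\<forall>i<8. \<forall>j<8. \<forall>k<8.
    (if k = 0 then x else x ^ (k - 1) * y) * L8 b2 b4 b5 b6 b7 b8 i j k
    = (if i = 0 then x else x ^ (i - 1) * y) * (if j = 0 then x else x ^ (j - 1) * y) * L8 a2 a4 a5 a6 a7 a8 i j k"
    unfolding all_lessThan_8 L8_brackets assms(3-8) using assms(1,2)
    by (simp add: basis_vec_def; simp add: field_simps; simp add: power_numeral_reduce algebra_simps)
qed (use assms in \<open>simp_all add: L8_vanish\<close>)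

lemma L8_iso_scale:
  fixes s a2 a4 a5 a6 a7 a8 :: "'a::field"
  assumes "s \<noteq> 0"
  shows "lie_iso8 (L8 a2 a4 a5 a6 a7 a8) (L8 (s * a2) (s * a4) (s * a5) (s * a6) (s * a7) (s * a8))"
  by (rule L8_iso_rescale[where x = 1 and y = s]) (simp_all add: assms)

definition shift_mat :: "nat \<Rightarrow> 'a::field \<Rightarrow> nat \<Rightarrow> nat \<Rightarrow> 'a" where
  "shift_mat d t k i = (if k = i then 1 else if i \<noteq> 0 \<and> k = i + d then t else 0)"

lemma shift_mat_lower_triangular: "k < i \<Longrightarrow> shift_mat d t k i = 0"
  by (simp add: shift_mat_def)

lemma shift_mat_diag: "shift_mat d t i i \<noteq> 0"
  by (simp add: shift_mat_def)

lemma shift_mat_2_entries: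
  shows
    "shift_mat 2 t 0 0 = 1" "shift_mat 2 t 0 1 = 0" "shift_mat 2 t 0 2 = 0" "shift_mat 2 t 0 3 = 0"
    "shift_mat 2 t 0 4 = 0" "shift_mat 2 t 0 5 = 0" "shift_mat 2 t 0 6 = 0" "shift_mat 2 t 0 7 = 0"
    "shift_mat 2 t 1 0 = 0" "shift_mat 2 t 1 1 = 1" "shift_mat 2 t 1 2 = 0" "shift_mat 2 t 1 3 = 0"
    "shift_mat 2 t 1 4 = 0" "shift_mat 2 t 1 5 = 0" "shift_mat 2 t 1 6 = 0" "shift_mat 2 t 1 7 = 0"
    "shift_mat 2 t 2 0 = 0" "shift_mat 2 t 2 1 = 0" "shift_mat 2 t 2 2 = 1" "shift_mat 2 t 2 3 = 0"
    "shift_mat 2 t 2 4 = 0" "shift_mat 2 t 2 5 = 0" "shift_mat 2 t 2 6 = 0" "shift_mat 2 t 2 7 = 0"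
    "shift_mat 2 t 3 0 = 0" "shift_mat 2 t 3 1 = t" "shift_mat 2 t 3 2 = 0" "shift_mat 2 t 3 3 = 1"
    "shift_mat 2 t 3 4 = 0" "shift_mat 2 t 3 5 = 0" "shift_mat 2 t 3 6 = 0" "shift_mat 2 t 3 7 = 0"
    "shift_mat 2 t 4 0 = 0" "shift_mat 2 t 4 1 = 0" "shift_mat 2 t 4 2 = t" "shift_mat 2 t 4 3 = 0"
    "shift_mat 2 t 4 4 = 1" "shift_mat 2 t 4 5 = 0" "shift_mat 2 t 4 6 = 0" "shift_mat 2 t 4 7 = 0"
    "shift_mat 2 t 5 0 = 0" "shift_mat 2 t 5 1 = 0" "shift_mat 2 t 5 2 = 0" "shift_mat 2 t 5 3 = t"
    "shift_mat 2 t 5 4 = 0" "shift_mat 2 t 5 5 = 1" "shift_mat 2 t 5 6 = 0" "shift_mat 2 t 5 7 = 0"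
    "shift_mat 2 t 6 0 = 0" "shift_mat 2 t 6 1 = 0" "shift_mat 2 t 6 2 = 0" "shift_mat 2 t 6 3 = 0"
    "shift_mat 2 t 6 4 = t" "shift_mat 2 t 6 5 = 0" "shift_mat 2 t 6 6 = 1" "shift_mat 2 t 6 7 = 0"
    "shift_mat 2 t 7 0 = 0" "shift_mat 2 t 7 1 = 0" "shift_mat 2 t 7 2 = 0" "shift_mat 2 t 7 3 = 0"
    "shift_mat 2 t 7 4 = 0" "shift_mat 2 t 7 5 = t" "shift_mat 2 t 7 6 = 0" "shift_mat 2 t 7 7 = 1"
  by (simp_all add: shift_mat_def)

lemma shift_mat_3_entries:
  shows
    "shift_mat 3 t 0 0 = 1" "shift_mat 3 t 0 1 = 0" "shift_mat 3 t 0 2 = 0" "shift_mat 3 t 0 3 = 0"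
    "shift_mat 3 t 0 4 = 0" "shift_mat 3 t 0 5 = 0" "shift_mat 3 t 0 6 = 0" "shift_mat 3 t 0 7 = 0"
    "shift_mat 3 t 1 0 = 0" "shift_mat 3 t 1 1 = 1" "shift_mat 3 t 1 2 = 0" "shift_mat 3 t 1 3 = 0"
    "shift_mat 3 t 1 4 = 0" "shift_mat 3 t 1 5 = 0" "shift_mat 3 t 1 6 = 0" "shift_mat 3 t 1 7 = 0"
    "shift_mat 3 t 2 0 = 0" "shift_mat 3 t 2 1 = 0" "shift_mat 3 t 2 2 = 1" "shift_mat 3 t 2 3 = 0"
    "shift_mat 3 t 2 4 = 0" "shift_mat 3 t 2 5 = 0" "shift_mat 3 t 2 6 = 0" "shift_mat 3 t 2 7 = 0"
    "shift_mat 3 t 3 0 = 0" "shift_mat 3 t 3 1 = 0" "shift_mat 3 t 3 2 = 0" "shift_mat 3 t 3 3 = 1"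
    "shift_mat 3 t 3 4 = 0" "shift_mat 3 t 3 5 = 0" "shift_mat 3 t 3 6 = 0" "shift_mat 3 t 3 7 = 0"
    "shift_mat 3 t 4 0 = 0" "shift_mat 3 t 4 1 = t" "shift_mat 3 t 4 2 = 0" "shift_mat 3 t 4 3 = 0"
    "shift_mat 3 t 4 4 = 1" "shift_mat 3 t 4 5 = 0" "shift_mat 3 t 4 6 = 0" "shift_mat 3 t 4 7 = 0"
    "shift_mat 3 t 5 0 = 0" "shift_mat 3 t 5 1 = 0" "shift_mat 3 t 5 2 = t" "shift_mat 3 t 5 3 = 0"
    "shift_mat 3 t 5 4 = 0" "shift_mat 3 t 5 5 = 1" "shift_mat 3 t 5 6 = 0" "shift_mat 3 t 5 7 = 0"
    "shift_mat 3 t 6 0 = 0" "shift_mat 3 t 6 1 = 0" "shift_mat 3 t 6 2 = 0" "shift_mat 3 t 6 3 = t"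
    "shift_mat 3 t 6 4 = 0" "shift_mat 3 t 6 5 = 0" "shift_mat 3 t 6 6 = 1" "shift_mat 3 t 6 7 = 0"
    "shift_mat 3 t 7 0 = 0" "shift_mat 3 t 7 1 = 0" "shift_mat 3 t 7 2 = 0" "shift_mat 3 t 7 3 = 0"
    "shift_mat 3 t 7 4 = t" "shift_mat 3 t 7 5 = 0" "shift_mat 3 t 7 6 = 0" "shift_mat 3 t 7 7 = 1"
  by (simp_all add: shift_mat_def)

lemma L8_iso_shift2:
  fixes t :: "'a::field"
  assumes "b7 = a7 - 2 * a4 * t" and "b8 = a8 - 2 * a6 * t"
  shows "lie_iso8 (L8 a2 a4 a5 a6 a7 a8) (L8 a2 a4 a5 a6 b7 b8)"
proof (rule L8_iso_sym, rule lie_iso8_by_matrix[where M = "shift_mat 2 t"])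
  show "\<forall>i<8. \<forall>j<8. \<forall>k<8. (\<Sum>m<8. shift_mat 2 t k m * L8 a2 a4 a5 a6 b7 b8 i j m)
     = (\<Sum>p<8. \<Sum>q<8. shift_mat 2 t p i * shift_mat 2 t q j * L8 a2 a4 a5 a6 a7 a8 p q k)"
    unfolding all_lessThan_8 sum_lessThan_8 L8_brackets shift_mat_2_entries assms
    by (simp add: basis_vec_def algebra_simps)
qed (simp_all add: shift_mat_lower_triangular shift_mat_diag L8_vanish)

lemma L8_iso_shift3:
  fixes t :: "'a::field"
  assumes "b8 = a8 - 3 * a4 * t"
  shows "lie_iso8 (L8 a2 a4 a5 a6 a7 a8) (L8 a2 a4 a5 a6 a7 b8)"
proof (rule L8_iso_sym, rule lie_iso8_by_matrix[where M = "shift_mat 3 t"])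
  show "\<forall>i<8. \<forall>j<8. \<forall>k<8. (\<Sum>m<8. shift_mat 3 t k m * L8 a2 a4 a5 a6 a7 b8 i j m)
     = (\<Sum>p<8. \<Sum>q<8. shift_mat 3 t p i * shift_mat 3 t q j * L8 a2 a4 a5 a6 a7 a8 p q k)"
    unfolding all_lessThan_8 sum_lessThan_8 L8_brackets shift_mat_3_entries assms
    by (simp add: basis_vec_def algebra_simps)
qed (simp_all add: shift_mat_lower_triangular shift_mat_diag L8_vanish)

text \<open>Column \<open>0\<close> is \<open>X\<^sub>0 + t X\<^sub>1\<close>, column \<open>1\<close> is \<open>X\<^sub>1\<close>, and column \<open>i + 1\<close> is the
  bracket of \<open>X\<^sub>0 + t X\<^sub>1\<close> with column \<open>i\<close>, computed in \<open>L8 a2 a4 a5 a6 a7 a8\<close>.\<close>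
definition X0_shift_mat :: "'a::field \<Rightarrow> 'a \<Rightarrow> 'a \<Rightarrow> 'a \<Rightarrow> 'a \<Rightarrow> 'a \<Rightarrow> 'a \<Rightarrow> nat \<Rightarrow> nat \<Rightarrow> 'a" where
  "X0_shift_mat a2 a4 a5 a6 a7 a8 t k i =
    (if k = i then 1
     else if k = 1 \<and> i = 0 then t
     else if k = 4 \<and> i = 3 then (a2 + 2 * a4) * t
     else if k = 5 \<and> i = 3 then (a5 + a6) * t
     else if k = 6 \<and> i = 3 then a7 * t
     else if k = 7 \<and> i = 3 then a8 * t
     else if k = 5 \<and> i = 4 then 2 * (a2 + 2 * a4) * t
     else if k = 6 \<and> i = 4 then 2 * (a5 + a6) * t + (a2 + a4) * (a2 + 2 * a4) * t\<^sup>2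
     else if k = 7 \<and> i = 4 then 2 * a7 * t + (2 * a4 * a5 + a2 * a6 + 2 * a2 * a5) * t\<^sup>2
     else if k = 6 \<and> i = 5 then (3 * a2 + 5 * a4) * t
     else if k = 7 \<and> i = 5 then (3 * a5 + 2 * a6) * t + (a2 + 2 * a4) * (3 * a2 + a4) * t\<^sup>2
     else if k = 7 \<and> i = 6 then (4 * a2 + 5 * a4) * t
     else 0)"

lemma X0_shift_mat_entries:
  shows
    "X0_shift_mat a2 a4 a5 a6 a7 a8 t 0 0 = 1"
    "X0_shift_mat a2 a4 a5 a6 a7 a8 t 0 1 = 0" "X0_shift_mat a2 a4 a5 a6 a7 a8 t 0 2 = 0" "X0_shift_mat a2 a4 a5 a6 a7 a8 t 0 3 = 0"
    "X0_shift_mat a2 a4 a5 a6 a7 a8 t 0 4 = 0" "X0_shift_mat a2 a4 a5 a6 a7 a8 t 0 5 = 0" "X0_shift_mat a2 a4 a5 a6 a7 a8 t 0 6 = 0"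
    "X0_shift_mat a2 a4 a5 a6 a7 a8 t 0 7 = 0"
    "X0_shift_mat a2 a4 a5 a6 a7 a8 t 1 0 = t"
    "X0_shift_mat a2 a4 a5 a6 a7 a8 t 1 1 = 1"
    "X0_shift_mat a2 a4 a5 a6 a7 a8 t 1 2 = 0" "X0_shift_mat a2 a4 a5 a6 a7 a8 t 1 3 = 0" "X0_shift_mat a2 a4 a5 a6 a7 a8 t 1 4 = 0"
    "X0_shift_mat a2 a4 a5 a6 a7 a8 t 1 5 = 0" "X0_shift_mat a2 a4 a5 a6 a7 a8 t 1 6 = 0" "X0_shift_mat a2 a4 a5 a6 a7 a8 t 1 7 = 0"
    "X0_shift_mat a2 a4 a5 a6 a7 a8 t 2 2 = 1"
    "X0_shift_mat a2 a4 a5 a6 a7 a8 t 2 0 = 0" "X0_shift_mat a2 a4 a5 a6 a7 a8 t 2 1 = 0" "X0_shift_mat a2 a4 a5 a6 a7 a8 t 2 3 = 0"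
    "X0_shift_mat a2 a4 a5 a6 a7 a8 t 2 4 = 0" "X0_shift_mat a2 a4 a5 a6 a7 a8 t 2 5 = 0" "X0_shift_mat a2 a4 a5 a6 a7 a8 t 2 6 = 0"
    "X0_shift_mat a2 a4 a5 a6 a7 a8 t 2 7 = 0"
    "X0_shift_mat a2 a4 a5 a6 a7 a8 t 3 3 = 1"
    "X0_shift_mat a2 a4 a5 a6 a7 a8 t 3 0 = 0" "X0_shift_mat a2 a4 a5 a6 a7 a8 t 3 1 = 0" "X0_shift_mat a2 a4 a5 a6 a7 a8 t 3 2 = 0"
    "X0_shift_mat a2 a4 a5 a6 a7 a8 t 3 4 = 0" "X0_shift_mat a2 a4 a5 a6 a7 a8 t 3 5 = 0" "X0_shift_mat a2 a4 a5 a6 a7 a8 t 3 6 = 0"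
    "X0_shift_mat a2 a4 a5 a6 a7 a8 t 3 7 = 0"
    "X0_shift_mat a2 a4 a5 a6 a7 a8 t 4 3 = (a2 + 2 * a4) * t"
    "X0_shift_mat a2 a4 a5 a6 a7 a8 t 4 4 = 1"
    "X0_shift_mat a2 a4 a5 a6 a7 a8 t 4 0 = 0" "X0_shift_mat a2 a4 a5 a6 a7 a8 t 4 1 = 0" "X0_shift_mat a2 a4 a5 a6 a7 a8 t 4 2 = 0"
    "X0_shift_mat a2 a4 a5 a6 a7 a8 t 4 5 = 0" "X0_shift_mat a2 a4 a5 a6 a7 a8 t 4 6 = 0" "X0_shift_mat a2 a4 a5 a6 a7 a8 t 4 7 = 0"
    "X0_shift_mat a2 a4 a5 a6 a7 a8 t 5 3 = (a5 + a6) * t"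
    "X0_shift_mat a2 a4 a5 a6 a7 a8 t 5 4 = 2 * (a2 + 2 * a4) * t"
    "X0_shift_mat a2 a4 a5 a6 a7 a8 t 5 5 = 1"
    "X0_shift_mat a2 a4 a5 a6 a7 a8 t 5 0 = 0" "X0_shift_mat a2 a4 a5 a6 a7 a8 t 5 1 = 0" "X0_shift_mat a2 a4 a5 a6 a7 a8 t 5 2 = 0"
    "X0_shift_mat a2 a4 a5 a6 a7 a8 t 5 6 = 0" "X0_shift_mat a2 a4 a5 a6 a7 a8 t 5 7 = 0"
    "X0_shift_mat a2 a4 a5 a6 a7 a8 t 6 3 = a7 * t"
    "X0_shift_mat a2 a4 a5 a6 a7 a8 t 6 4 = 2 * (a5 + a6) * t + (a2 + a4) * (a2 + 2 * a4) * t\<^sup>2"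
    "X0_shift_mat a2 a4 a5 a6 a7 a8 t 6 5 = (3 * a2 + 5 * a4) * t"
    "X0_shift_mat a2 a4 a5 a6 a7 a8 t 6 6 = 1"
    "X0_shift_mat a2 a4 a5 a6 a7 a8 t 6 0 = 0" "X0_shift_mat a2 a4 a5 a6 a7 a8 t 6 1 = 0" "X0_shift_mat a2 a4 a5 a6 a7 a8 t 6 2 = 0"
    "X0_shift_mat a2 a4 a5 a6 a7 a8 t 6 7 = 0"
    "X0_shift_mat a2 a4 a5 a6 a7 a8 t 7 3 = a8 * t"
    "X0_shift_mat a2 a4 a5 a6 a7 a8 t 7 4 = 2 * a7 * t + (2 * a4 * a5 + a2 * a6 + 2 * a2 * a5) * t\<^sup>2"
    "X0_shift_mat a2 a4 a5 a6 a7 a8 t 7 5 = (3 * a5 + 2 * a6) * t + (a2 + 2 * a4) * (3 * a2 + a4) * t\<^sup>2"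
    "X0_shift_mat a2 a4 a5 a6 a7 a8 t 7 6 = (4 * a2 + 5 * a4) * t"
    "X0_shift_mat a2 a4 a5 a6 a7 a8 t 7 7 = 1"
    "X0_shift_mat a2 a4 a5 a6 a7 a8 t 7 0 = 0" "X0_shift_mat a2 a4 a5 a6 a7 a8 t 7 1 = 0" "X0_shift_mat a2 a4 a5 a6 a7 a8 t 7 2 = 0"
  by (simp_all add: X0_shift_mat_def)

lemma L8_iso_X0_shift:
  fixes t :: "'a::field"
  assumes "b5 = a5 - (5 * a4\<^sup>2 + 5 * a2 * a4 + 2 * a2\<^sup>2) * t"
    and "b6 = a6 - 3 * a4 * (a2 + a4) * t"
    and "b7 = a7 - (9 * a4 + 5 * a2) * (a5 + a6) * t
        + (36 * a4 ^ 3 + 56 * a2 * a4\<^sup>2 + 29 * a2\<^sup>2 * a4 + 5 * a2 ^ 3) * t\<^sup>2"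
    and "b8 = a8 - (2 * a6\<^sup>2 + 5 * a5 * a6 + 3 * a5\<^sup>2 + (9 * a4 + 6 * a2) * a7) * t
        + (59 * a4\<^sup>2 * a6 + 63 * a4\<^sup>2 * a5 + 68 * a2 * a4 * a6 + 72 * a2 * a4 * a5
           + 20 * a2\<^sup>2 * a6 + 21 * a2\<^sup>2 * a5) * t\<^sup>2
        - (164 * a4 ^ 4 + 352 * a2 * a4 ^ 3 + 285 * a2\<^sup>2 * a4\<^sup>2 + 103 * a2 ^ 3 * a4
           + 14 * a2 ^ 4) * t ^ 3"
  shows "lie_iso8 (L8 a2 a4 a5 a6 a7 a8) (L8 a2 a4 b5 b6 b7 b8)"
proof (rule L8_iso_sym, rule lie_iso8_by_matrix[where M = "X0_shift_mat a2 a4 a5 a6 a7 a8 t"])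
  show "\<forall>i<8. \<forall>j<8. \<forall>k<8. (\<Sum>m<8. X0_shift_mat a2 a4 a5 a6 a7 a8 t k m * L8 a2 a4 b5 b6 b7 b8 i j m)
     = (\<Sum>p<8. \<Sum>q<8. X0_shift_mat a2 a4 a5 a6 a7 a8 t p i * X0_shift_mat a2 a4 a5 a6 a7 a8 t q j
          * L8 a2 a4 a5 a6 a7 a8 p q k)"
    unfolding all_lessThan_8 sum_lessThan_8 L8_brackets X0_shift_mat_entries assms
    by (simp add: basis_vec_def algebra_simps power2_eq_square power3_eq_cube power4_eq_xxxx)
qed (auto simp: X0_shift_mat_def L8_vanish)

lemma L8_iso_X0_shift_ex:
  fixes a2 a4 a5 a6 a7 a8 t :: "'a::field"
  shows "\<exists>b7 b8. lie_iso8 (L8 a2 a4 a5 a6 a7 a8)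
    (L8 a2 a4 (a5 - (5 * a4\<^sup>2 + 5 * a2 * a4 + 2 * a2\<^sup>2) * t) (a6 - 3 * a4 * (a2 + a4) * t) b7 b8)"
  by (blast intro: L8_iso_X0_shift)

lemma alg_closed_nth_root:
  assumes "alg_closed TYPE('a::field)" and "n > 0"
  shows "\<exists>r::'a. r ^ n = c"
proof -
  have "degree (monom 1 n + [:- c:]) = n"
    using assms(2) by (simp add: degree_add_eq_left degree_monom_eq)
  then obtain r :: 'a where "poly (monom 1 n + [:- c:]) r = 0"
    using assms unfolding alg_closed_def by metis
  then show ?thesis by (auto simp: poly_monom)
qed

lemma L8_iso_a7_a8_zero:
  fixes a2 a4 a5 a6 a7 a8 :: "'a::field_char_0"
  assumes "a4 \<noteq> 0"
  shows "lie_iso8 (L8 a2 a4 a5 a6 a7 a8) (L8 a2 a4 a5 a6 0 0)"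
proof -
  define b8 where "b8 = a8 - 2 * a6 * (a7 / (2 * a4))"
  have "lie_iso8 (L8 a2 a4 a5 a6 a7 a8) (L8 a2 a4 a5 a6 0 b8)"
    by (rule L8_iso_shift2[where t = "a7 / (2 * a4)"]) (use assms in \<open>simp_all add: b8_def\<close>)
  also have "lie_iso8 \<dots> (L8 a2 a4 a5 a6 0 0)"
    by (rule L8_iso_shift3[where t = "b8 / (3 * a4)"]) (use assms in simp)
  finally show ?thesis .
qed

lemma L8_normal_form_a4_nonzero:
  fixes a2 a4 a5 a6 a7 a8 :: "'a::field_char_0"
  assumes a4: "a4 \<noteq> 0" and a2: "a2 + 2 * a4 \<noteq> 0"
  shows "lie_iso8 (L8 a2 a4 a5 a6 a7 a8) (L8 (a2 / a4) 1 (-1) 1 0 0)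
    \<or> lie_iso8 (L8 a2 a4 a5 a6 a7 a8) (L8 (a2 / a4) 1 0 0 0 0)"
proof -
  define t where "t = (a5 + a6) / (2 * (a2 + 2 * a4)\<^sup>2)"
  define s where "s = a6 - 3 * a4 * (a2 + a4) * t"
  have "a5 + a6 = 2 * (a2 + 2 * a4)\<^sup>2 * t"
    using a2 by (simp add: t_def)
  then have b5: "a5 - (5 * a4\<^sup>2 + 5 * a2 * a4 + 2 * a2\<^sup>2) * t = - s"
    by (simp add: s_def algebra_simps power2_eq_square)
  obtain b7 b8 where "lie_iso8 (L8 a2 a4 a5 a6 a7 a8) (L8 a2 a4 (- s) s b7 b8)"
    using L8_iso_X0_shift_ex[of a2 a4 a5 a6 a7 a8 t]
    unfolding b5 s_def[symmetric] by blast
  also have "lie_iso8 \<dots> (L8 a2 a4 (- s) s 0 0)"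
    using a4 by (rule L8_iso_a7_a8_zero)
  finally have reduced: "lie_iso8 (L8 a2 a4 a5 a6 a7 a8) (L8 a2 a4 (- s) s 0 0)" .
  show ?thesis
  proof (cases "s = 0")
    case False
    have "lie_iso8 (L8 a2 a4 (- s) s 0 0) (L8 (a2 / a4) 1 (-1) 1 0 0)"
      by (rule L8_iso_rescale[where x = "s / a4" and y = "(s / a4)\<^sup>2 / a4"])
        (use a4 False in \<open>simp_all add: field_simps power2_eq_square power3_eq_cube\<close>)
    then show ?thesis using reduced lie_iso8_trans by blast
  next
    case True
    have "lie_iso8 (L8 a2 a4 (- s) s 0 0) (L8 (a2 / a4) 1 0 0 0 0)"
      using L8_iso_scale[of "1 / a4" a2 a4 "- s" s 0 0] a4 True by simp
    then show ?thesis using reduced lie_iso8_trans by blast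
  qed
qed

lemma L8_normal_form_a2_plus_2a4_zero:
  fixes a2 a4 a5 a6 a7 a8 :: "'a::field_char_0"
  assumes a4: "a4 \<noteq> 0" and "a2 + 2 * a4 = 0"
  shows "lie_iso8 (L8 a2 a4 a5 a6 a7 a8) (L8 (-2) 1 1 0 0 0)
    \<or> lie_iso8 (L8 a2 a4 a5 a6 a7 a8) (L8 (-2) 1 0 0 0 0)"
proof -
  have a2: "a2 = - 2 * a4"
    using \<open>a2 + 2 * a4 = 0\<close> by (simp add: eq_neg_iff_add_eq_0)
  define t where "t = - a6 / (3 * a4\<^sup>2)"
  define s where "s = a5 + a6"
  have b5: "a5 - (5 * a4\<^sup>2 + 5 * a2 * a4 + 2 * a2\<^sup>2) * t = s"
    and b6: "a6 - 3 * a4 * (a2 + a4) * t = 0"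
    using a4 by (simp_all add: a2 s_def t_def field_simps power2_eq_square)
  obtain b7 b8 where "lie_iso8 (L8 a2 a4 a5 a6 a7 a8) (L8 a2 a4 s 0 b7 b8)"
    using L8_iso_X0_shift_ex[of a2 a4 a5 a6 a7 a8 t] unfolding b5 b6 by blast
  also have "lie_iso8 \<dots> (L8 a2 a4 s 0 0 0)"
    using a4 by (rule L8_iso_a7_a8_zero)
  finally have reduced: "lie_iso8 (L8 a2 a4 a5 a6 a7 a8) (L8 a2 a4 s 0 0 0)" .
  show ?thesis
  proof (cases "s = 0")
    case False
    have "lie_iso8 (L8 a2 a4 s 0 0 0) (L8 (-2) 1 1 0 0 0)"
      by (rule L8_iso_rescale[where x = "s / a4" and y = "(s / a4)\<^sup>2 / a4"])
        (use a4 False in \<open>simp_all add: a2 field_simps power2_eq_square power3_eq_cube\<close>)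
    then show ?thesis using reduced lie_iso8_trans by blast
  next
    case True
    have "lie_iso8 (L8 a2 a4 s 0 0 0) (L8 (-2) 1 0 0 0 0)"
      using L8_iso_scale[of "1 / a4" a2 a4 s 0 0 0] a4 True by (simp add: a2)
    then show ?thesis using reduced lie_iso8_trans by blast
  qed
qed

lemma L8_normal_form_a4_zero_a6_nonzero:
  fixes a2 a5 a6 a7 a8 :: "'a::field_char_0"
  assumes a2: "a2 \<noteq> 0" and a6: "a6 \<noteq> 0"
  shows "\<exists>l. lie_iso8 (L8 a2 0 a5 a6 a7 a8) (L8 1 0 (-1) 1 l 0)"
proof -
  define x where "x = a6 / a2"
  define y where "y = x\<^sup>2 / a2"
  define u where "u = a5 / a6"
  have "x \<noteq> 0" "y \<noteq> 0"
    using a2 a6 by (simp_all add: x_def y_def)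
  then have "lie_iso8 (L8 a2 0 a5 a6 a7 a8) (L8 1 0 u 1 (a7 * y / x ^ 4) (a8 * y / x ^ 5))"
    by (rule L8_iso_rescale)
      (use a2 a6 in \<open>simp_all add: x_def y_def u_def field_simps power2_eq_square power3_eq_cube\<close>)
  also obtain b7 b8 where "lie_iso8 \<dots> (L8 1 0 (-1) 1 b7 b8)"
    using L8_iso_X0_shift_ex[of 1 0 u 1 "a7 * y / x ^ 4" "a8 * y / x ^ 5" "(u + 1) / 2"]
    by (auto simp: field_simps)
  also have "lie_iso8 \<dots> (L8 1 0 (-1) 1 b7 0)"
    by (rule L8_iso_shift2[where t = "b8 / 2"]) simp_all
  finally show ?thesis by blast
qed

lemma L8_normal_form_a4_a6_zero:
  fixes a2 a5 a7 a8 :: "'a::field_char_0"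
  assumes closed: "alg_closed TYPE('a)" and a2: "a2 \<noteq> 0"
  shows "\<exists>l. lie_iso8 (L8 a2 0 a5 0 a7 a8) (L8 l 0 0 0 1 1)
    \<or> lie_iso8 (L8 a2 0 a5 0 a7 a8) (L8 1 0 0 0 1 0)
    \<or> lie_iso8 (L8 a2 0 a5 0 a7 a8) (L8 1 0 0 0 0 1)
    \<or> lie_iso8 (L8 a2 0 a5 0 a7 a8) (L8 1 0 0 0 0 0)"
proof -
  have "a5 - (5 * 0\<^sup>2 + 5 * a2 * 0 + 2 * a2\<^sup>2) * (a5 / (2 * a2\<^sup>2)) = 0"
    using a2 by simp
  then obtain b7 b8 where reduced: "lie_iso8 (L8 a2 0 a5 0 a7 a8) (L8 a2 0 0 0 b7 b8)"
    using L8_iso_X0_shift_ex[of a2 0 a5 0 a7 a8 "a5 / (2 * a2\<^sup>2)"] by auto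
  consider "b7 \<noteq> 0" "b8 \<noteq> 0" | "b7 \<noteq> 0" "b8 = 0" | "b7 = 0" "b8 \<noteq> 0" | "b7 = 0" "b8 = 0"
    by blast
  then show ?thesis
  proof cases
    case 1
    define x where "x = b8 / b7"
    have x: "x \<noteq> 0" "b8 = x * b7"
      using 1 by (simp_all add: x_def)
    have "lie_iso8 (L8 a2 0 0 0 b7 b8) (L8 (a2 * x\<^sup>2 / b7) 0 0 0 1 1)"
      by (rule L8_iso_rescale[where x = x and y = "x ^ 4 / b7"])
        (use 1 x in \<open>simp_all add: field_simps power_numeral_reduce\<close>)
    then show ?thesis using reduced lie_iso8_trans by blast
  next
    case 2
    obtain r where r: "r\<^sup>2 = b7 / a2"
      using alg_closed_nth_root[OF closed, of 2 "b7 / a2"] by auto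
    then have r0: "r \<noteq> 0" and b7: "b7 = a2 * r\<^sup>2"
      using 2 a2 by auto
    have "lie_iso8 (L8 a2 0 0 0 b7 b8) (L8 1 0 0 0 1 0)"
      by (rule L8_iso_rescale[where x = r and y = "r\<^sup>2 / a2"])
        (use 2 a2 r0 b7 in \<open>simp_all add: field_simps power_numeral_reduce\<close>)
    then show ?thesis using reduced lie_iso8_trans by blast
  next
    case 3
    obtain r where r: "r ^ 3 = b8 / a2"
      using alg_closed_nth_root[OF closed, of 3 "b8 / a2"] by auto
    then have r0: "r \<noteq> 0" and b8: "b8 = a2 * r ^ 3"
      using 3 a2 by auto
    have "lie_iso8 (L8 a2 0 0 0 b7 b8) (L8 1 0 0 0 0 1)"
      by (rule L8_iso_rescale[where x = r and y = "r\<^sup>2 / a2"])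
        (use 3 a2 r0 b8 in \<open>simp_all add: field_simps power_numeral_reduce\<close>)
    then show ?thesis using reduced lie_iso8_trans by blast
  next
    case 4
    then have "lie_iso8 (L8 a2 0 0 0 b7 b8) (L8 1 0 0 0 0 0)"
      using L8_iso_scale[of "1 / a2" a2 0 0 0 b7 b8] a2 by simp
    then show ?thesis using reduced lie_iso8_trans by blast
  qed
qed

lemma L8_normal_form_a2_a4_zero_a6_nonzero:
  fixes a5 a6 a7 a8 :: "'a::field_char_0"
  assumes a6: "a6 \<noteq> 0"
  shows "lie_iso8 (L8 0 0 a5 a6 a7 a8) (L8 0 0 (a5 / a6) 1 1 0)
    \<or> lie_iso8 (L8 0 0 a5 a6 a7 a8) (L8 0 0 (a5 / a6) 1 0 0)"
proof -
  have reduced: "lie_iso8 (L8 0 0 a5 a6 a7 a8) (L8 0 0 a5 a6 a7 0)"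
    by (rule L8_iso_shift2[where t = "a8 / (2 * a6)"]) (use a6 in simp_all)
  show ?thesis
  proof (cases "a7 = 0")
    case False
    define x where "x = a7 / a6"
    have "lie_iso8 (L8 0 0 a5 a6 a7 0) (L8 0 0 (a5 / a6) 1 1 0)"
      by (rule L8_iso_rescale[where x = x and y = "x ^ 3 / a6"])
        (use a6 False in \<open>simp_all add: x_def field_simps power_numeral_reduce\<close>)
    then show ?thesis using reduced lie_iso8_trans by blast
  next
    case True
    have "lie_iso8 (L8 0 0 a5 a6 a7 0) (L8 0 0 (a5 / a6) 1 0 0)"
      using L8_iso_scale[of "1 / a6" 0 0 a5 a6 a7 0] a6 True by simp
    then show ?thesis using reduced lie_iso8_trans by blast
  qed
qed

lemma L8_normal_form_a2_a4_a6_zero_a5_nonzero: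
  fixes a5 a7 a8 :: "'a::field_char_0"
  assumes a5: "a5 \<noteq> 0"
  shows "lie_iso8 (L8 0 0 a5 0 a7 a8) (L8 0 0 1 0 1 0)
    \<or> lie_iso8 (L8 0 0 a5 0 a7 a8) (L8 0 0 1 0 0 0)"
proof -
  have reduced: "lie_iso8 (L8 0 0 a5 0 a7 a8) (L8 0 0 a5 0 a7 0)"
    by (rule L8_iso_X0_shift[where t = "a8 / (3 * a5\<^sup>2)"])
      (use a5 in \<open>simp_all add: power2_eq_square\<close>)
  show ?thesis
  proof (cases "a7 = 0")
    case False
    define x where "x = a7 / a5"
    have "lie_iso8 (L8 0 0 a5 0 a7 0) (L8 0 0 1 0 1 0)"
      by (rule L8_iso_rescale[where x = x and y = "x ^ 3 / a5"])
        (use a5 False in \<open>simp_all add: x_def field_simps power_numeral_reduce\<close>)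
    then show ?thesis using reduced lie_iso8_trans by blast
  next
    case True
    have "lie_iso8 (L8 0 0 a5 0 a7 0) (L8 0 0 1 0 0 0)"
      using L8_iso_scale[of "1 / a5" 0 0 a5 0 a7 0] a5 True by simp
    then show ?thesis using reduced lie_iso8_trans by blast
  qed
qed

lemma L8_normal_form_a2_a4_a5_a6_zero:
  fixes a7 a8 :: "'a::field_char_0"
  shows "lie_iso8 (L8 0 0 0 0 a7 a8) (L8 0 0 0 0 1 1) \<or> lie_iso8 (L8 0 0 0 0 a7 a8) (L8 0 0 0 0 1 0)
    \<or> lie_iso8 (L8 0 0 0 0 a7 a8) (L8 0 0 0 0 0 1) \<or> lie_iso8 (L8 0 0 0 0 a7 a8) (L8 0 0 0 0 0 0)"
proof -
  consider "a7 \<noteq> 0" "a8 \<noteq> 0" | "a7 \<noteq> 0" "a8 = 0" | "a7 = 0" "a8 \<noteq> 0" | "a7 = 0" "a8 = 0"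
    by blast
  then show ?thesis
  proof cases
    case 1
    define x where "x = a8 / a7"
    have "lie_iso8 (L8 0 0 0 0 a7 a8) (L8 0 0 0 0 1 1)"
      by (rule L8_iso_rescale[where x = x and y = "x ^ 4 / a7"])
        (use 1 in \<open>simp_all add: x_def field_simps power_numeral_reduce\<close>)
    then show ?thesis by blast
  next
    case 2
    then show ?thesis using L8_iso_scale[of "1 / a7" 0 0 0 0 a7 a8] by simp
  next
    case 3
    then show ?thesis using L8_iso_scale[of "1 / a8" 0 0 0 0 a7 a8] by simp
  next
    case 4
    then show ?thesis using L8_iso_scale[of 1 0 0 0 0 a7 a8] by simp
  qed
qed

theorem proposition14:
  fixes a2 a4 a5 a6 a7 a8 :: "'a::field_char_0"
  assumes "alg_closed TYPE('a)"
  shows "\<exists>l::'a.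
     lie_iso8 (L8 a2 a4 a5 a6 a7 a8) (L8 l 1 (-1) 1 0 0)
   \<or> lie_iso8 (L8 a2 a4 a5 a6 a7 a8) (L8 l 1 0 0 0 0)
   \<or> lie_iso8 (L8 a2 a4 a5 a6 a7 a8) (L8 (-2) 1 1 0 0 0)
   \<or> lie_iso8 (L8 a2 a4 a5 a6 a7 a8) (L8 1 0 (-1) 1 l 0)
   \<or> lie_iso8 (L8 a2 a4 a5 a6 a7 a8) (L8 0 0 l 1 1 0)
   \<or> lie_iso8 (L8 a2 a4 a5 a6 a7 a8) (L8 0 0 l 1 0 0)
   \<or> lie_iso8 (L8 a2 a4 a5 a6 a7 a8) (L8 l 0 0 0 1 1)
   \<or> lie_iso8 (L8 a2 a4 a5 a6 a7 a8) (L8 1 0 0 0 1 0)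
   \<or> lie_iso8 (L8 a2 a4 a5 a6 a7 a8) (L8 1 0 0 0 0 1)
   \<or> lie_iso8 (L8 a2 a4 a5 a6 a7 a8) (L8 1 0 0 0 0 0)
   \<or> lie_iso8 (L8 a2 a4 a5 a6 a7 a8) (L8 0 0 1 0 1 0)
   \<or> lie_iso8 (L8 a2 a4 a5 a6 a7 a8) (L8 0 0 1 0 0 0)
   \<or> lie_iso8 (L8 a2 a4 a5 a6 a7 a8) (L8 0 0 0 0 1 0)
   \<or> lie_iso8 (L8 a2 a4 a5 a6 a7 a8) (L8 0 0 0 0 0 1)
   \<or> lie_iso8 (L8 a2 a4 a5 a6 a7 a8) (L8 0 0 0 0 0 0)"
proof -
  consider "a4 \<noteq> 0" "a2 + 2 * a4 \<noteq> 0" | "a4 \<noteq> 0" "a2 + 2 * a4 = 0"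
    | "a4 = 0" "a2 \<noteq> 0" "a6 \<noteq> 0" | "a4 = 0" "a2 \<noteq> 0" "a6 = 0"
    | "a4 = 0" "a2 = 0" "a6 \<noteq> 0" | "a4 = 0" "a2 = 0" "a6 = 0" "a5 \<noteq> 0"
    | "a4 = 0" "a2 = 0" "a6 = 0" "a5 = 0"
    by blast
  then show ?thesis
  proof cases
    case 1
    then show ?thesis using L8_normal_form_a4_nonzero by blast
  next
    case 2
    then show ?thesis using L8_normal_form_a2_plus_2a4_zero by blast
  next
    case 3
    then show ?thesis using L8_normal_form_a4_zero_a6_nonzero[OF 3(2,3)] unfolding 3(1) by blast
  next
    case 4
    then show ?thesis using L8_normal_form_a4_a6_zero[OF assms 4(2)] unfolding 4(1,3) by blast
  next
    case 5
    then show ?thesis using L8_normal_form_a2_a4_zero_a6_nonzero[OF 5(3)] unfolding 5(1,2) by blast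
  next
    case 6
    then show ?thesis using L8_normal_form_a2_a4_a6_zero_a5_nonzero[OF 6(4)] unfolding 6(1-3) by blast
  next
    case 7
    then show ?thesis using L8_normal_form_a2_a4_a5_a6_zero unfolding 7 by blast
  qed
qed

end
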